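(* For every integer $t\ge1$ and every $a\in\{1,\dots,m\}$, $$q^{(a)}_t(\mathbf{z};q,\mathbf{Q})=\sum_{\mathbf{i}\in\{1,\dots,k+\ell\}^t}\mathrm{wt}(\mathbf{i})\,Q_{c(\mathbf{i})}^{a}\,\mathbf{z}_{\mathbf{i}} .$$
   Context: Fix integers $m\ge1$ and $k_1,\dots,k_m,\ell_1,\dots,\ell_m\ge0$; put $k=\sum k_a$, $\ell=\sum\ell_a$, $d_0=0$, $d_a=d_{a-1}+k_a+\ell_a$. For $i\in\{1,\dots,k+\ell\}$: parity $\bar i=\bar0$ if $d_{a-1}<i\le d_{a-1}+k_a$ for some $a$, $\bar i=\bar1$ if $d_a-\ell_a<i\le d_a$ for some $a$; color $c(i)=a$ if $d_{a-1}<i\le d_a$. Let $q,Q_1,\dots,Q_m$ be indeterminates and $z_1,\dots,z_{k+\ell}$ commuting variables (the $z_i$ of parity $\bar0$ are the "$x$-variables", those of parity $\bar1$ the "$y$-variables"); work in $\mathbb{Q}(q,Q_1,\dots,Q_m)[z_1,\dots,z_{k+\ell}]$. For a sequence $\mathbf{i}=(i_1,\dots,i_t)$: $c(\mathbf{i})$ is the color of $\max\{i_1,\dots,i_t\}$; $\mathbf{z}_{\mathbf{i}}=(-1)^{\ell_1(\mathbf{i})}z_{i_1}\cdots z_{i_t}$; $\ell_s(\mathbf{i})$ is the number of entries of parity $\bar s$; $\delta_s(\mathbf{i})$ is the number of distinct values of parity $\bar s$ among the entries, $\delta(\mathbf{i})=\delta_0(\mathbf{i})+\delta_1(\mathbf{i})$.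 Define $$q^{(a)}_t(\mathbf{z};q,\mathbf{Q})=\sum_{1\le i_1\le\cdots\le i_t\le k+\ell}Q_{c(\mathbf{i})}^a(-q^{-1})^{\ell_1(\mathbf{i})-\delta_1(\mathbf{i})}q^{\ell_0(\mathbf{i})-\delta_0(\mathbf{i})}(q-q^{-1})^{\delta(\mathbf{i})-1}\mathbf{z}_{\mathbf{i}}.$$ A sequence $\mathbf{j}=(j_1,\dots,j_t)$ is up-down if there is $p\in\{1,\dots,t\}$ with $j_1<\cdots<j_p$ and $j_p\ge j_{p+1}\ge\cdots\ge j_t$ ($p$ is the position of the first occurrence of the maximum). Its weight is $\mathrm{wt}(\mathbf{j})=0$ if $\mathbf{j}$ is not up-down, and otherwise $\mathrm{wt}(\mathbf{j})=\prod_{r=1}^{p-1}w^{<}(j_r)\prod_{r=p+1}^{t}w^{\ge}(j_r)$, where $w^{<}(j)=-q^{-1}$ if $\bar j=\bar0$, $w^{<}(j)=q$ if $\bar j=\bar1$, $w^{\ge}(j)=q$ if $\bar j=\bar0$, $w^{\ge}(j)=-q^{-1}$ if $\bar j=\bar1$. *)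

theory Defs
  imports Main
begin

(* Data: m colours; kk a = k_a, ll a = l_a for a in {1..m}.
   Indices i range over {1..k+l}; sequences are lists over {1..k+l}. *)

definition dd :: "(nat \<Rightarrow> nat) \<Rightarrow> (nat \<Rightarrow> nat) \<Rightarrow> nat \<Rightarrow> nat" where
  "dd kk ll a = (\<Sum>b=1..a. kk b + ll b)"

definition ntot :: "nat \<Rightarrow> (nat \<Rightarrow> nat) \<Rightarrow> (nat \<Rightarrow> nat) \<Rightarrow> nat" where
  "ntot m kk ll = (\<Sum>b=1..m. kk b) + (\<Sum>b=1..m. ll b)"

definition par0 :: "nat \<Rightarrow> (nat \<Rightarrow> nat) \<Rightarrow> (nat \<Rightarrow> nat) \<Rightarrow> nat \<Rightarrow> bool" where
  "par0 m kk ll i = (\<exists>a\<in>{1..m}. dd kk ll (a - 1) < i \<and> i \<le> dd kk ll (a - 1) + kk a)"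

definition par1 :: "nat \<Rightarrow> (nat \<Rightarrow> nat) \<Rightarrow> (nat \<Rightarrow> nat) \<Rightarrow> nat \<Rightarrow> bool" where
  "par1 m kk ll i = (\<exists>a\<in>{1..m}. dd kk ll a - ll a < i \<and> i \<le> dd kk ll a)"

definition colour :: "nat \<Rightarrow> (nat \<Rightarrow> nat) \<Rightarrow> (nat \<Rightarrow> nat) \<Rightarrow> nat \<Rightarrow> nat" where
  "colour m kk ll i = (THE a. a \<in> {1..m} \<and> dd kk ll (a - 1) < i \<and> i \<le> dd kk ll a)"

definition seqcolour :: "nat \<Rightarrow> (nat \<Rightarrow> nat) \<Rightarrow> (nat \<Rightarrow> nat) \<Rightarrow> nat list \<Rightarrow> nat" where
  "seqcolour m kk ll is = colour m kk ll (Max (set is))"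

definition zseq :: "nat \<Rightarrow> (nat \<Rightarrow> nat) \<Rightarrow> (nat \<Rightarrow> nat) \<Rightarrow> (nat \<Rightarrow> 'f::comm_ring_1) \<Rightarrow> nat list \<Rightarrow> 'f" where
  "zseq m kk ll z is = (-1) ^ length (filter (par1 m kk ll) is) * prod_list (map z is)"

definition lcount :: "(nat \<Rightarrow> bool) \<Rightarrow> nat list \<Rightarrow> nat" where
  "lcount P is = length (filter P is)"

definition dcount :: "(nat \<Rightarrow> bool) \<Rightarrow> nat list \<Rightarrow> nat" where
  "dcount P is = card {i \<in> set is. P i}"

definition qfun :: "nat \<Rightarrow> (nat \<Rightarrow> nat) \<Rightarrow> (nat \<Rightarrow> nat) \<Rightarrow> nat \<Rightarrow> nat \<Rightarrow>
    'f::field \<Rightarrow> (nat \<Rightarrow> 'f) \<Rightarrow> (nat \<Rightarrow> 'f) \<Rightarrow> 'f" where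
  "qfun m kk ll a t q Q z =
    (\<Sum>is \<in> {is. length is = t \<and> set is \<subseteq> {1..ntot m kk ll} \<and> sorted is}.
       Q (seqcolour m kk ll is) ^ a
       * (- inverse q) ^ (lcount (par1 m kk ll) is - dcount (par1 m kk ll) is)
       * q ^ (lcount (par0 m kk ll) is - dcount (par0 m kk ll) is)
       * (q - inverse q) ^ (dcount (par0 m kk ll) is + dcount (par1 m kk ll) is - 1)
       * zseq m kk ll z is)"

(* up-down at (0-based) position p: j_0 < ... < j_p >= j_{p+1} >= ... *)
definition updown_at :: "nat list \<Rightarrow> nat \<Rightarrow> bool" where
  "updown_at j p = (p < length j \<and> sorted_wrt (<) (take (Suc p) j) \<and> sorted_wrt (\<ge>) (drop p j))"

definition updown :: "nat list \<Rightarrow> bool" where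
  "updown j = (\<exists>p. updown_at j p)"

definition wlt :: "nat \<Rightarrow> (nat \<Rightarrow> nat) \<Rightarrow> (nat \<Rightarrow> nat) \<Rightarrow> 'f::field \<Rightarrow> nat \<Rightarrow> 'f" where
  "wlt m kk ll q j = (if par0 m kk ll j then - inverse q else q)"

definition wge :: "nat \<Rightarrow> (nat \<Rightarrow> nat) \<Rightarrow> (nat \<Rightarrow> nat) \<Rightarrow> 'f::field \<Rightarrow> nat \<Rightarrow> 'f" where
  "wge m kk ll q j = (if par0 m kk ll j then q else - inverse q)"

definition wt :: "nat \<Rightarrow> (nat \<Rightarrow> nat) \<Rightarrow> (nat \<Rightarrow> nat) \<Rightarrow> 'f::field \<Rightarrow> nat list \<Rightarrow> 'f" where
  "wt m kk ll q j =
    (if updown j then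
       (let p = (THE p. updown_at j p) in
          (\<Prod>r<p. wlt m kk ll q (j ! r)) * (\<Prod>r\<in>{Suc p..<length j}. wge m kk ll q (j ! r)))
     else 0)"

end

theory Submission
  imports Defs "HOL-Library.Multiset"
begin

text \<open>
  An up-down sequence is determined by its multiset of entries, i.e.\ by a sorted sequence \<open>s\<close>,
  together with the set \<open>A\<close> of entries preceding its maximum, and \<open>A\<close> ranges over all subsets
  of the distinct non-maximal values of \<open>s\<close>. The entries after the maximum are one copy of every
  value outside \<open>A \<union> {max s}\<close> plus all repeated copies. Hence summing the weight over \<open>A\<close>
  produces the factor \<open>w\<^sup>< v + w\<^sup>\<ge> v = q - 1/q\<close> for each of the \<open>\<delta> - 1\<close> non-maximal values \<open>v\<close>, times
  the product of \<open>w\<^sup>\<ge>\<close> over the repeated copies, which is \<open>(-1/q)\<^bsup>\<ell>\<^sub>1 - \<delta>\<^sub>1\<^esup> q\<^bsup>\<ell>\<^sub>0 - \<delta>\<^sub>0\<^esup>\<close>.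
  The colour and the monomial depend only on the multiset, so this is the coefficient in \<open>q\<^sup>(\<^sup>a\<^sup>)\<^sub>t\<close>.
\<close>

lemma dd_mono: "a \<le> b \<Longrightarrow> dd kk ll a \<le> dd kk ll b"
  unfolding dd_def by (rule sum_mono2) auto

lemma dd_pred: "1 \<le> a \<Longrightarrow> dd kk ll a = dd kk ll (a - 1) + kk a + ll a"
  by (cases a) (simp_all add: dd_def)

lemma ntot_eq_dd: "ntot m kk ll = dd kk ll m"
  unfolding ntot_def dd_def by (simp add: sum.distrib)

lemma dd_block_exists:
  "0 < i \<Longrightarrow> i \<le> dd kk ll m \<Longrightarrow> \<exists>a\<in>{1..m}. dd kk ll (a - 1) < i \<and> i \<le> dd kk ll a"
proof (induction m)
  case 0 then show ?case by (simp add: dd_def)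
next
  case (Suc m)
  show ?case
  proof (cases "i \<le> dd kk ll m")
    case True
    then have "m \<noteq> 0" using Suc.prems by (cases m) (auto simp: dd_def)
    with Suc.IH[OF Suc.prems(1) True] show ?thesis by auto
  next
    case False
    then show ?thesis using Suc.prems by (intro bexI[of _ "Suc m"]) auto
  qed
qed

lemma dd_block_unique:
  assumes "1 \<le> a" "1 \<le> b" "dd kk ll (a - 1) < i" "i \<le> dd kk ll a"
    "dd kk ll (b - 1) < i" "i \<le> dd kk ll b"
  shows "a = b"
proof (rule ccontr)
  assume "a \<noteq> b"
  then have "a \<le> b - 1 \<or> b \<le> a - 1" by auto
  then show False
    using dd_mono[of a "b - 1" kk ll] dd_mono[of b "a - 1" kk ll] assms by auto
qed

lemma par1_iff_not_par0:
  assumes "i \<in> {1..ntot m kk ll}"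
  shows "par1 m kk ll i \<longleftrightarrow> \<not> par0 m kk ll i"
proof -
  obtain a where a: "a \<in> {1..m}" "dd kk ll (a - 1) < i" "i \<le> dd kk ll a"
    using dd_block_exists[of i kk ll m] assms by (auto simp: ntot_eq_dd)
  have block: "b = a" if "b \<in> {1..m}" "dd kk ll (b - 1) < i" "i \<le> dd kk ll b" for b
    using dd_block_unique[of b a kk ll i] a that by auto
  have "par0 m kk ll i \<longleftrightarrow> i \<le> dd kk ll (a - 1) + kk a"
  proof
    assume "par0 m kk ll i"
    then obtain b where b: "b \<in> {1..m}" "dd kk ll (b - 1) < i" "i \<le> dd kk ll (b - 1) + kk b"
      unfolding par0_def by blast
    then have "b = a" using block dd_pred[of b kk ll] by auto
    then show "i \<le> dd kk ll (a - 1) + kk a" using b by simp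
  qed (use a in \<open>auto simp: par0_def\<close>)
  moreover have "par1 m kk ll i \<longleftrightarrow> dd kk ll (a - 1) + kk a < i"
  proof
    assume "par1 m kk ll i"
    then obtain b where b: "b \<in> {1..m}" "dd kk ll b - ll b < i" "i \<le> dd kk ll b"
      unfolding par1_def by blast
    then have "b = a" using block dd_pred[of b kk ll] by auto
    then show "dd kk ll (a - 1) + kk a < i" using b dd_pred[of a kk ll] a by auto
  next
    assume "dd kk ll (a - 1) + kk a < i"
    then show "par1 m kk ll i"
      unfolding par1_def using a dd_pred[of a kk ll] by (intro bexI[of _ a]) auto
  qed
  ultimately show ?thesis by auto
qed

definition repetitions :: "'a list \<Rightarrow> 'a multiset" where
  "repetitions xs = mset xs - mset_set (set xs)"

lemma count_repetitions: "count (repetitions xs) v = count_list xs v - 1"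
  by (simp add: repetitions_def count_mset count_mset_set' count_list_0_iff)

lemma mset_minus_mset_set:
  assumes "B \<subseteq> set xs"
  shows "mset xs - mset_set B = repetitions xs + mset_set (set xs - B)"
proof (rule multiset_eqI)
  fix v
  have "finite B" using assms finite_subset by blast
  moreover have "v \<in> set xs \<Longrightarrow> 0 < count_list xs v"
    using count_list_0_iff[of xs v] by linarith
  ultimately show "count (mset xs - mset_set B) v = count (repetitions xs + mset_set (set xs - B)) v"
    using assms by (auto simp: count_repetitions count_mset count_mset_set')
qed

lemma mset_eq_repetitions_plus: "mset xs = repetitions xs + mset_set (set xs)"
  using mset_minus_mset_set[of "{}" xs] by simp

lemma mset_set_subseteq_mset: "B \<subseteq> set xs \<Longrightarrow> mset_set B \<subseteq># mset xs"
  by (simp add: mset_eq_repetitions_plus subset_imp_msubset_mset_set subset_mset.add_increasing)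

lemma size_filter_repetitions:
  "size (filter_mset P (repetitions xs)) = lcount P xs - dcount P xs"
proof -
  have "size (filter_mset P (mset xs)) = size (filter_mset P (repetitions xs)) + dcount P xs"
    by (subst mset_eq_repetitions_plus) (simp add: dcount_def)
  then show ?thesis by (simp add: lcount_def flip: mset_filter)
qed

lemma prod_mset_image_if:
  "prod_mset (image_mset (\<lambda>x. if P x then b else c) X) =
     b ^ size (filter_mset P X) * c ^ size (filter_mset (\<lambda>x. \<not> P x) X)"
  by (induction X) (auto simp: mult_ac)

lemma mset_sorted_list_of_set: "mset (sorted_list_of_set A) = mset_set A"
  by (metis mset_sorted_list_of_multiset sorted_list_of_mset_set)

lemma updown_atD:
  assumes "updown_at j p"
  shows "p < length j" "\<And>r. r < p \<Longrightarrow> j ! r < j ! p"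
    "\<And>r. p \<le> r \<Longrightarrow> r < length j \<Longrightarrow> j ! r \<le> j ! p"
proof -
  show pl: "p < length j" using assms by (simp add: updown_at_def)
  have inc: "sorted_wrt (<) (take (Suc p) j)" and dec: "sorted_wrt (\<ge>) (drop p j)"
    using assms by (auto simp: updown_at_def)
  show "j ! r < j ! p" if "r < p" for r
  proof -
    have "take (Suc p) j ! r < take (Suc p) j ! p"
      using inc that pl unfolding sorted_wrt_iff_nth_less by auto
    then show ?thesis using that by simp
  qed
  show "j ! r \<le> j ! p" if "p \<le> r" "r < length j" for r
  proof (cases "r = p")
    case False
    then have "0 < r - p" "r - p < length (drop p j)" using that by auto
    then have "drop p j ! (r - p) \<le> drop p j ! 0"
      using dec unfolding sorted_wrt_iff_nth_less by blast
    then show ?thesis using that by simp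
  qed simp
qed

lemma updown_at_unique: "updown_at j p \<Longrightarrow> updown_at j p' \<Longrightarrow> p = p'"
  using updown_atD[of j p] updown_atD[of j p']
  by (metis linorder_neqE_nat not_le order_less_imp_le)

lemma The_updown_at: "updown_at j p \<Longrightarrow> (THE p. updown_at j p) = p"
  using updown_at_unique by blast

lemma Max_updown_at: "updown_at j p \<Longrightarrow> Max (set j) = j ! p"
  using updown_atD[of j p]
  by (intro Max_eqI) (auto simp: in_set_conv_nth, metis less_imp_le not_le)

definition updown_list :: "nat list \<Rightarrow> nat set \<Rightarrow> nat list" where
  "updown_list s A = sorted_list_of_set A @ Max (set s) #
     rev (sorted_list_of_multiset (mset s - mset_set (insert (Max (set s)) A)))"

lemma
  assumes "s \<noteq> []" and A: "A \<subseteq> set s - {Max (set s)}"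
  shows mset_updown_list: "mset (updown_list s A) = mset s"
    and updown_at_updown_list: "updown_at (updown_list s A) (card A)"
proof -
  define M where "M = Max (set s)"
  define rest where "rest = sorted_list_of_multiset (mset s - mset_set (insert M A))"
  have fA: "finite A" using A finite_subset by blast
  have "M \<notin> A" using A by (auto simp: M_def)
  have MA: "insert M A \<subseteq> set s" using A assms(1) by (auto simp: M_def)
  have M_max: "x \<le> M" if "x \<in> set s" for x
    using that by (simp add: M_def)
  have unfold: "updown_list s A = sorted_list_of_set A @ M # rev rest"
    by (simp add: updown_list_def M_def rest_def)
  have "mset (updown_list s A) = mset_set (insert M A) + (mset s - mset_set (insert M A))"
    using fA \<open>M \<notin> A\<close> by (simp add: unfold rest_def mset_sorted_list_of_set)
  also have "\<dots> = mset s"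
    using mset_set_subseteq_mset[OF MA] by (rule subset_mset.add_diff_inverse)
  finally show "mset (updown_list s A) = mset s" .
  have "\<forall>x\<in>A. x < M"
    using A M_max by (fastforce simp: M_def order.strict_iff_order)
  then have "sorted_wrt (<) (sorted_list_of_set A @ [M])"
    using fA by (simp add: sorted_wrt_append)
  moreover have "set rest \<subseteq> set s"
    unfolding rest_def by (auto dest: in_diffD)
  then have "sorted_wrt (\<ge>) (M # rev rest)"
    using M_max by (auto simp: sorted_wrt_rev rest_def)
  ultimately show "updown_at (updown_list s A) (card A)"
    unfolding updown_at_def unfold using fA by simp
qed

lemma updown_list_updown_at:
  assumes "updown_at j p"
  shows "updown_list (sort j) (set (take p j)) = j"
proof -
  have p: "p < length j" using updown_atD(1)[OF assms] .
  have take_Suc: "take (Suc p) j = take p j @ [j ! p]"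
    using p by (simp add: take_Suc_conv_app_nth)
  have drop_p: "drop p j = j ! p # drop (Suc p) j"
    using p by (simp add: Cons_nth_drop_Suc)
  have inc: "sorted_wrt (<) (take p j)" and dec: "sorted (rev (drop (Suc p) j))"
    using assms unfolding updown_at_def take_Suc drop_p by (auto simp: sorted_wrt_append sorted_wrt_rev)
  have distinct: "distinct (take (Suc p) j)"
    using assms by (auto simp: updown_at_def strict_sorted_iff)
  have "mset j - mset_set (insert (j ! p) (set (take p j))) = mset (drop (Suc p) j)"
  proof -
    have "mset_set (insert (j ! p) (set (take p j))) = mset (take (Suc p) j)"
      using mset_set_set[OF distinct] by (simp add: take_Suc)
    moreover have "mset j = mset (take (Suc p) j) + mset (drop (Suc p) j)"
      by (simp flip: mset_append)
    ultimately show ?thesis by simp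
  qed
  then have "sorted_list_of_multiset (mset j - mset_set (insert (j ! p) (set (take p j))))
      = rev (drop (Suc p) j)"
    using sorted_list_of_multiset_mset[of "rev (drop (Suc p) j)"] dec by (simp add: sorted_sort_id)
  moreover have "sorted_list_of_set (set (take p j)) = take p j"
    using inc by (simp add: sorted_list_of_set_sort_remdups strict_sorted_iff distinct_remdups_id sorted_sort_id)
  ultimately show ?thesis
    using p Max_updown_at[OF assms] by (simp add: updown_list_def id_take_nth_drop[symmetric])
qed

lemma bij_betw_updown_list:
  assumes "0 < n"
  shows "bij_betw (\<lambda>(s, A). updown_list s A)
    (SIGMA s:{s. length s = n \<and> set s \<subseteq> B \<and> sorted s}. Pow (set s - {Max (set s)}))
    {j. length j = n \<and> set j \<subseteq> B \<and> updown j}"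
    (is "bij_betw ?f ?S ?U")
proof -
  define g where "g j = (sort j, set (take (THE p. updown_at j p) j))" for j
  have forward: "g (?f x) = x \<and> ?f x \<in> ?U" if "x \<in> ?S" for x
  proof -
    obtain s A where x: "x = (s, A)" by force
    have s: "length s = n" "set s \<subseteq> B" "sorted s" and A: "A \<subseteq> set s - {Max (set s)}"
      using \<open>x \<in> ?S\<close> by (auto simp: x)
    have "s \<noteq> []" using s(1) assms by auto
    note up = updown_at_updown_list[OF this A] and ms = mset_updown_list[OF this A]
    have "finite A" using A finite_subset by blast
    then have "set (take (card A) (updown_list s A)) = A"
      by (simp add: updown_list_def)
    moreover have "sort (updown_list s A) = s"
      using ms s(3) by (metis mset_sort properties_for_sort)
    moreover have "length (updown_list s A) = n" "set (updown_list s A) \<subseteq> B"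
      using ms s by (metis mset_eq_length, metis set_mset_mset)
    ultimately show ?thesis
      using The_updown_at[OF up] up by (auto simp: x g_def updown_def)
  qed
  have backward: "?f (g j) = j \<and> g j \<in> ?S" if j: "j \<in> ?U" for j
  proof -
    obtain p where p: "updown_at j p" using j by (auto simp: updown_def)
    have "x < Max (set j)" if "x \<in> set (take p j)" for x
      using that updown_atD(2)[OF p] Max_updown_at[OF p] by (auto simp: in_set_conv_nth)
    then show ?thesis
      using j The_updown_at[OF p] updown_list_updown_at[OF p] by (auto simp: g_def dest: in_set_takeD)
  qed
  show ?thesis
    by (rule bij_betw_byWitness[where f' = g]) (use forward backward in blast)+
qed

lemma prod_list_map_take:
  "n \<le> length xs \<Longrightarrow> prod_list (map f (take n xs)) = (\<Prod>r<n. f (xs ! r))"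
  by (simp add: prod.list_conv_set_nth lessThan_atLeast0 min_absorb1)

lemma prod_list_map_drop:
  "prod_list (map f (drop n xs)) = (\<Prod>r\<in>{n..<length xs}. f (xs ! r))"
proof -
  have "prod_list (map f (drop n xs)) = (\<Prod>r\<in>{0..<length xs - n}. f (xs ! (r + n)))"
    by (simp add: prod.list_conv_set_nth add.commute)
  also have "\<dots> = (\<Prod>r\<in>{n..<length xs}. f (xs ! r))"
    using prod.shift_bounds_nat_ivl[of "\<lambda>r. f (xs ! r)" 0 n "length xs - n"]
    by (cases "n \<le> length xs") simp_all
  finally show ?thesis .
qed

lemma wt_updown_at:
  assumes "updown_at j p"
  shows "wt m kk ll q j =
    prod_list (map (wlt m kk ll q) (take p j)) * prod_list (map (wge m kk ll q) (drop (Suc p) j))"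
proof -
  have "updown j" using assms unfolding updown_def by blast
  then show ?thesis
    using updown_atD(1)[OF assms]
    by (simp add: wt_def The_updown_at[OF assms] prod_list_map_take prod_list_map_drop)
qed

lemma wt_updown_list:
  assumes "s \<noteq> []" and A: "A \<subseteq> set s - {Max (set s)}"
  shows "wt m kk ll q (updown_list s A) = (\<Prod>v\<in>A. wlt m kk ll q v)
    * prod_mset (image_mset (wge m kk ll q) (repetitions s))
    * (\<Prod>v\<in>set s - {Max (set s)} - A. wge m kk ll q v)"
proof -
  define M where "M = Max (set s)"
  have fA: "finite A" using A finite_subset by blast
  have "insert M A \<subseteq> set s" using A assms(1) by (auto simp: M_def)
  then have tail: "mset s - mset_set (insert M A) = repetitions s + mset_set (set s - {M} - A)"
    by (simp add: mset_minus_mset_set Diff_insert2[symmetric])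
  have "wt m kk ll q (updown_list s A) = (\<Prod>v\<in>A. wlt m kk ll q v)
      * prod_mset (image_mset (wge m kk ll q) (mset s - mset_set (insert M A)))"
    using wt_updown_at[OF updown_at_updown_list[OF assms]] fA
    by (simp add: updown_list_def M_def prod_unfold_prod_mset mset_sorted_list_of_set
        flip: prod_mset_prod_list)
  also have "\<dots> = (\<Prod>v\<in>A. wlt m kk ll q v)
      * prod_mset (image_mset (wge m kk ll q) (repetitions s))
      * (\<Prod>v\<in>set s - {M} - A. wge m kk ll q v)"
    unfolding tail by (simp add: prod_unfold_prod_mset mult.assoc)
  finally show ?thesis unfolding M_def .
qed

lemma sum_wt_updown_list:
  assumes "s \<noteq> []"
  shows "(\<Sum>A\<in>Pow (set s - {Max (set s)}). wt m kk ll q (updown_list s A)) =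
    prod_mset (image_mset (wge m kk ll q) (repetitions s)) * (q - inverse q) ^ (card (set s) - 1)"
proof -
  define D where "D = set s - {Max (set s)}"
  have "(\<Sum>A\<in>Pow D. wt m kk ll q (updown_list s A)) =
      prod_mset (image_mset (wge m kk ll q) (repetitions s))
      * (\<Sum>A\<in>Pow D. (\<Prod>v\<in>A. wlt m kk ll q v) * (\<Prod>v\<in>D - A. wge m kk ll q v))"
    by (simp add: sum_distrib_left D_def wt_updown_list[OF assms] mult_ac)
  also have "(\<Sum>A\<in>Pow D. (\<Prod>v\<in>A. wlt m kk ll q v) * (\<Prod>v\<in>D - A. wge m kk ll q v))
      = (\<Prod>v\<in>D. wlt m kk ll q v + wge m kk ll q v)"
    by (simp add: prod_add D_def)
  also have "\<dots> = (\<Prod>v\<in>D. q - inverse q)"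
    by (intro prod.cong) (simp_all add: wlt_def wge_def)
  also have "\<dots> = (q - inverse q) ^ (card (set s) - 1)"
    using assms by (simp add: D_def card_Diff_singleton)
  finally show ?thesis unfolding D_def .
qed

lemma sum_updown_lists:
  fixes F :: "nat list \<Rightarrow> 'f::field"
  assumes "0 < n" and "finite B" and F: "\<And>x y. mset x = mset y \<Longrightarrow> F x = F y"
  shows "(\<Sum>j\<in>{j. length j = n \<and> set j \<subseteq> B \<and> updown j}. wt m kk ll q j * F j) =
    (\<Sum>s\<in>{s. length s = n \<and> set s \<subseteq> B \<and> sorted s}.
       prod_mset (image_mset (wge m kk ll q) (repetitions s)) * (q - inverse q) ^ (card (set s) - 1) * F s)"
proof -
  let ?S = "{s. length s = n \<and> set s \<subseteq> B \<and> sorted s}"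
  have "finite ?S"
    by (rule finite_subset[OF _ finite_lists_length_eq[OF \<open>finite B\<close>, of n]]) auto
  have "(\<Sum>j\<in>{j. length j = n \<and> set j \<subseteq> B \<and> updown j}. wt m kk ll q j * F j) =
      (\<Sum>(s, A)\<in>(SIGMA s:?S. Pow (set s - {Max (set s)})).
         wt m kk ll q (updown_list s A) * F (updown_list s A))"
    unfolding sum.reindex_bij_betw[OF bij_betw_updown_list[OF \<open>0 < n\<close>], symmetric]
    by (intro sum.cong) auto
  also have "\<dots> = (\<Sum>(s, A)\<in>(SIGMA s:?S. Pow (set s - {Max (set s)})). wt m kk ll q (updown_list s A) * F s)"
    using \<open>0 < n\<close> by (intro sum.cong refl) (auto intro!: arg_cong[where f = "(*) _"] F mset_updown_list)
  also have "\<dots> = (\<Sum>s\<in>?S. (\<Sum>A\<in>Pow (set s - {Max (set s)}). wt m kk ll q (updown_list s A)) * F s)"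
    unfolding sum_distrib_right using \<open>finite ?S\<close> by (subst sum.Sigma) auto
  also have "\<dots> = (\<Sum>s\<in>?S.
       prod_mset (image_mset (wge m kk ll q) (repetitions s)) * (q - inverse q) ^ (card (set s) - 1) * F s)"
    using \<open>0 < n\<close> by (intro sum.cong refl) (auto simp: sum_wt_updown_list)
  finally show ?thesis .
qed

lemma prod_mset_wge_repetitions:
  assumes "set s \<subseteq> {1..ntot m kk ll}"
  shows "prod_mset (image_mset (wge m kk ll q) (repetitions s)) =
    (- inverse q) ^ (lcount (par1 m kk ll) s - dcount (par1 m kk ll) s)
    * q ^ (lcount (par0 m kk ll) s - dcount (par0 m kk ll) s)"
proof -
  have "set_mset (repetitions s) \<subseteq> set s"
    unfolding repetitions_def by (auto dest: in_diffD)
  then have "filter_mset (\<lambda>x. \<not> par0 m kk ll x) (repetitions s) = filter_mset (par1 m kk ll) (repetitions s)"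
    using assms par1_iff_not_par0 by (auto intro!: filter_mset_cong)
  then show ?thesis
    unfolding wge_def prod_mset_image_if by (simp add: size_filter_repetitions mult.commute)
qed

lemma card_set_eq_dcount:
  assumes "set s \<subseteq> {1..ntot m kk ll}"
  shows "card (set s) = dcount (par0 m kk ll) s + dcount (par1 m kk ll) s"
proof -
  have "set s = {x \<in> set s. par0 m kk ll x} \<union> {x \<in> set s. par1 m kk ll x}"
    and "{x \<in> set s. par0 m kk ll x} \<inter> {x \<in> set s. par1 m kk ll x} = {}"
    using assms par1_iff_not_par0 by auto
  then show ?thesis
    unfolding dcount_def by (metis List.finite_set card_Un_disjoint finite_Un)
qed

lemma prod_wge_repetitions_eq_coeff:
  assumes "set s \<subseteq> {1..ntot m kk ll}"
  shows "prod_mset (image_mset (wge m kk ll q) (repetitions s)) * (q - inverse q) ^ (card (set s) - 1) =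
    (- inverse q) ^ (lcount (par1 m kk ll) s - dcount (par1 m kk ll) s)
    * q ^ (lcount (par0 m kk ll) s - dcount (par0 m kk ll) s)
    * (q - inverse q) ^ (dcount (par0 m kk ll) s + dcount (par1 m kk ll) s - 1)"
  using assms by (simp add: prod_mset_wge_repetitions card_set_eq_dcount)

lemma seqcolour_mset_cong: "mset xs = mset ys \<Longrightarrow> seqcolour m kk ll xs = seqcolour m kk ll ys"
  unfolding seqcolour_def by (metis set_mset_mset)

lemma zseq_mset_cong: "mset xs = mset ys \<Longrightarrow> zseq m kk ll z xs = zseq m kk ll z ys"
  unfolding zseq_def by (metis mset_filter mset_map prod_mset_prod_list size_mset)

theorem mainTheorem2:
  fixes m :: nat and kk ll :: "nat \<Rightarrow> nat" and t a :: nat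
    and q :: "'f::field_char_0" and Q z :: "nat \<Rightarrow> 'f"
  assumes "m \<ge> 1" and "t \<ge> 1" and "a \<in> {1..m}" and "q \<noteq> 0"
  shows "qfun m kk ll a t q Q z =
    (\<Sum>is \<in> {is. length is = t \<and> set is \<subseteq> {1..ntot m kk ll}}.
       wt m kk ll q is * Q (seqcolour m kk ll is) ^ a * zseq m kk ll z is)"
proof -
  let ?B = "{1..ntot m kk ll}"
  define F where "F xs = Q (seqcolour m kk ll xs) ^ a * zseq m kk ll z xs" for xs
  have "(\<Sum>is \<in> {is. length is = t \<and> set is \<subseteq> ?B}. wt m kk ll q is * F is)
      = (\<Sum>j\<in>{j. length j = t \<and> set j \<subseteq> ?B \<and> updown j}. wt m kk ll q j * F j)"
    using finite_lists_length_eq[of ?B t]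
    by (intro sum.mono_neutral_right) (auto simp: wt_def conj_commute)
  also have "\<dots> = (\<Sum>s\<in>{s. length s = t \<and> set s \<subseteq> ?B \<and> sorted s}.
       prod_mset (image_mset (wge m kk ll q) (repetitions s)) * (q - inverse q) ^ (card (set s) - 1) * F s)"
  proof (rule sum_updown_lists)
    show "F xs = F ys" if "mset xs = mset ys" for xs ys
      unfolding F_def seqcolour_mset_cong[OF that] zseq_mset_cong[OF that] ..
  qed (use \<open>t \<ge> 1\<close> in auto)
  also have "\<dots> = qfun m kk ll a t q Q z"
    unfolding qfun_def F_def
    by (intro sum.cong refl) (auto simp: prod_wge_repetitions_eq_coeff[simplified] mult_ac)
  finally show ?thesis by (simp add: F_def mult.assoc)
qed

end
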